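(* Let $\mathcal D$ be partitioned into rectangles $K_{ij}$, let $V_h^k$ be the space of piecewise polynomials of degree at most $k$ on this mesh, $\mathbf V_h^k$ the $M$-vectors with entries in $V_h^k$, and let $\mathbf A(\mathbf x)=(a_{kj})$ be a symmetric positive definite $M\times M$ matrix function, smooth on each cell, with $\bar{\mathbf A}$ the matrix of gradients $(\nabla a_{kl})$. Let $\Delta t>0$ be a uniform time step and consider the fully discrete LDG–leapfrog scheme: find $\widehat{\mathbf v}_h^{n+1}\in\mathbf V_h^k$ and $\widehat{\mathbf S}_h^n\in(\mathbf V_h^k)^2$ such that for every cell $K$ with outward normal $\boldsymbol\nu$, $$\int_K\frac{\widehat{\mathbf v}_h^{n+1}-2\widehat{\mathbf v}_h^n+\widehat{\mathbf v}_h^{n-1}}{(\Delta t)^2}\cdot\mathbf p_h\,d\mathbf x+\int_K\mathbf A\widehat{\mathbf S}_h^n\cdot\nabla\mathbf p_h\,d\mathbf x-\big(\mathbf A^-(\widehat{\mathbf S}_h^n)^-\boldsymbol\nu,\mathbf p_h\big)_{\partial K}=0\quad\forall\mathbf p_h\in\mathbf V_h^k,$$ $$\int_K\widehat{\mathbf S}_h^n\cdot\mathbf w_h\,d\mathbf x+\int_K\mathbf A\widehat{\mathbf v}_h^n\cdot\operatorname{div}\mathbf w_h\,d\mathbf x+\int_K\bar{\mathbf A}\widehat{\mathbf v}_h^n\cdot\mathbf w_h\,d\mathbf x-\big(\mathbf A(\widehat{\mathbf v}_h^n)^+,\mathbf w_h\boldsymbol\nu\big)_{\partial K}=0\quad\forall\mathbf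 w_h\in(\mathbf V_h^k)^2,$$ with alternating traces ($-$: left/lower, $+$: right/upper) and homogeneous Dirichlet boundary conditions on $\partial\mathcal D$. Then the fully discrete energy $$E_h^{n+1}=\Big\|\frac{\widehat{\mathbf v}_h^{n+1}-\widehat{\mathbf v}_h^n}{\Delta t}\Big\|^2+\Big\|\frac{\widehat{\mathbf S}_h^{n+1}+\widehat{\mathbf S}_h^n}{2}\Big\|^2-\frac{(\Delta t)^2}{4}\Big\|\frac{\widehat{\mathbf S}_h^{n+1}-\widehat{\mathbf S}_h^n}{\Delta t}\Big\|^2$$ (with $\|\cdot\|$ the $L^2(\mathcal D)$ norm) is conserved by the scheme for all $n$, i.e. $E_h^{n+1}=E_h^n$.
   Context: The scheme discretizes the stochastic Galerkin system $\partial_t^2\widehat{\mathbf v}=\operatorname{div}(\mathbf A\widehat{\mathbf S})$, $\widehat{\mathbf S}=\mathbf A\nabla\widehat{\mathbf v}$ with $\widehat{\mathbf v}=0$ on $\partial\mathcal D$, where $a_{kj}(\mathbf x)=\int a(\mathbf x,\mathbf y)\Phi_k\Phi_j\rho\,d\mathbf y$. In the boundary term of the second equation $\mathbf A$ is evaluated from inside the cell; $\mathbf A^-$ has entries $a_{kj}^-$. "$\cdot$" denotes the Euclidean/Frobenius inner product, and divergence/gradient act row-wise. $\widehat{\mathbf v}_h^n,\widehat{\mathbf S}_h^n$ are the approximations at $t_n=n\Delta t$. *)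

theory Defs
  imports "HOL-Analysis.Analysis"
begin

text \<open>Discrete functions are stored cell-wise: the restriction to each cell is a polynomial,
  which we store as a polynomial function on the whole plane (this gives the one-sided traces).\<close>

definition cell :: "(nat \<Rightarrow> real) \<Rightarrow> (nat \<Rightarrow> real) \<Rightarrow> nat \<Rightarrow> nat \<Rightarrow> (real \<times> real) set" where
  "cell x y i j = cbox (x i, y j) (x (Suc i), y (Suc j))"

definition poly2 :: "nat \<Rightarrow> (real \<times> real \<Rightarrow> real) \<Rightarrow> bool" where
  "poly2 k f \<longleftrightarrow> (\<exists>c :: nat \<Rightarrow> nat \<Rightarrow> real.
      \<forall>a b. f (a, b) = (\<Sum>i\<le>k. \<Sum>j\<le>k - i. c i j * a ^ i * b ^ j))"

definition pdx :: "(real \<times> real \<Rightarrow> real) \<Rightarrow> real \<times> real \<Rightarrow> real" where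
  "pdx f z = deriv (\<lambda>s. f (s, snd z)) (fst z)"

definition pdy :: "(real \<times> real \<Rightarrow> real) \<Rightarrow> real \<times> real \<Rightarrow> real" where
  "pdy f z = deriv (\<lambda>t. f (fst z, t)) (snd z)"

definition grad :: "(real \<times> real \<Rightarrow> real) \<Rightarrow> real \<times> real \<Rightarrow> real \<times> real" where
  "grad f z = (pdx f z, pdy f z)"

definition dive :: "(real \<times> real \<Rightarrow> real \<times> real) \<Rightarrow> real \<times> real \<Rightarrow> real" where
  "dive w z = pdx (\<lambda>u. fst (w u)) z + pdy (\<lambda>u. snd (w u)) z"

fun Ck :: "nat \<Rightarrow> (real \<times> real \<Rightarrow> real) \<Rightarrow> (real \<times> real) set \<Rightarrow> bool" where
  "Ck 0 f U = continuous_on U f"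
| "Ck (Suc n) f U = (continuous_on U f \<and>
     (\<forall>z\<in>U. (\<lambda>s. f (s, snd z)) differentiable (at (fst z)) \<and>
             (\<lambda>t. f (fst z, t)) differentiable (at (snd z))) \<and>
     Ck n (pdx f) U \<and> Ck n (pdy f) U)"

definition smooth_near :: "(real \<times> real \<Rightarrow> real) \<Rightarrow> (real \<times> real) set \<Rightarrow> bool" where
  "smooth_near f S \<longleftrightarrow> (\<exists>U. open U \<and> S \<subseteq> U \<and> (\<forall>n. Ck n f U))"

text \<open>Boundary term (A^- S^- nu, p) over the four edges; "-" = left/lower cell; on the boundary of
  the domain the interior trace is used for S (and A).\<close>
definition eq1 ::
  "(nat \<Rightarrow> real) \<Rightarrow> (nat \<Rightarrow> real) \<Rightarrow> nat \<Rightarrow> real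
   \<Rightarrow> (nat \<Rightarrow> nat \<Rightarrow> nat \<Rightarrow> nat \<Rightarrow> real \<times> real \<Rightarrow> real)
   \<Rightarrow> (nat \<Rightarrow> nat \<Rightarrow> nat \<Rightarrow> nat \<Rightarrow> real \<times> real \<Rightarrow> real)
   \<Rightarrow> (nat \<Rightarrow> nat \<Rightarrow> nat \<Rightarrow> nat \<Rightarrow> real \<times> real \<Rightarrow> real \<times> real)
   \<Rightarrow> nat \<Rightarrow> nat \<Rightarrow> nat \<Rightarrow> (nat \<Rightarrow> real \<times> real \<Rightarrow> real) \<Rightarrow> bool" where
  "eq1 x y M dt A v S n i j p \<longleftrightarrow>
    (let il = (if i = 0 then i else i - 1); jl = (if j = 0 then j else j - 1) in
     (\<Sum>k<M. integral (cell x y i j)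
        (\<lambda>z. (v (Suc n) k i j z - 2 * v n k i j z + v (n - 1) k i j z) / dt ^ 2 * p k z))
   + (\<Sum>k<M. integral (cell x y i j)
        (\<lambda>z. (\<Sum>l<M. A i j k l z *\<^sub>R S n l i j z) \<bullet> grad (p k) z))
   - (\<Sum>k<M.
        integral {y j..y (Suc j)} (\<lambda>t. (\<Sum>l<M. A i j k l (x (Suc i), t) * fst (S n l i j (x (Suc i), t)))
                                        * p k (x (Suc i), t))
      - integral {y j..y (Suc j)} (\<lambda>t. (\<Sum>l<M. A il j k l (x i, t) * fst (S n l il j (x i, t)))
                                        * p k (x i, t))
      + integral {x i..x (Suc i)} (\<lambda>s. (\<Sum>l<M. A i j k l (s, y (Suc j)) * snd (S n l i j (s, y (Suc j))))
                                        * p k (s, y (Suc j)))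
      - integral {x i..x (Suc i)} (\<lambda>s. (\<Sum>l<M. A i jl k l (s, y j) * snd (S n l i jl (s, y j)))
                                        * p k (s, y j)))
   = 0)"

text \<open>Boundary term (A (v)^+, w nu) with A from inside the cell; "+" = right/upper cell;
  on the boundary of the domain the homogeneous Dirichlet value 0 is used for v.\<close>
definition eq2 ::
  "(nat \<Rightarrow> real) \<Rightarrow> (nat \<Rightarrow> real) \<Rightarrow> nat \<Rightarrow> nat \<Rightarrow> nat
   \<Rightarrow> (nat \<Rightarrow> nat \<Rightarrow> nat \<Rightarrow> nat \<Rightarrow> real \<times> real \<Rightarrow> real)
   \<Rightarrow> (nat \<Rightarrow> nat \<Rightarrow> nat \<Rightarrow> nat \<Rightarrow> real \<times> real \<Rightarrow> real)
   \<Rightarrow> (nat \<Rightarrow> nat \<Rightarrow> nat \<Rightarrow> nat \<Rightarrow> real \<times> real \<Rightarrow> real \<times> real)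
   \<Rightarrow> nat \<Rightarrow> nat \<Rightarrow> nat \<Rightarrow> (nat \<Rightarrow> real \<times> real \<Rightarrow> real \<times> real) \<Rightarrow> bool" where
  "eq2 x y Nx Ny M A v S n i j w \<longleftrightarrow>
    (let vR = (\<lambda>l t. if Suc i < Nx then v n l (Suc i) j (x (Suc i), t) else 0);
         vL = (\<lambda>l t. if i = 0 then 0 else v n l i j (x i, t));
         vT = (\<lambda>l s. if Suc j < Ny then v n l i (Suc j) (s, y (Suc j)) else 0);
         vB = (\<lambda>l s. if j = 0 then 0 else v n l i j (s, y j)) in
     (\<Sum>k<M. integral (cell x y i j) (\<lambda>z. S n k i j z \<bullet> w k z))
   + (\<Sum>k<M. integral (cell x y i j)
        (\<lambda>z. (\<Sum>l<M. A i j k l z * v n l i j z) * dive (w k) z))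
   + (\<Sum>k<M. integral (cell x y i j)
        (\<lambda>z. (\<Sum>l<M. v n l i j z *\<^sub>R grad (A i j k l) z) \<bullet> w k z))
   - (\<Sum>k<M.
        integral {y j..y (Suc j)} (\<lambda>t. (\<Sum>l<M. A i j k l (x (Suc i), t) * vR l t)
                                        * fst (w k (x (Suc i), t)))
      - integral {y j..y (Suc j)} (\<lambda>t. (\<Sum>l<M. A i j k l (x i, t) * vL l t)
                                        * fst (w k (x i, t)))
      + integral {x i..x (Suc i)} (\<lambda>s. (\<Sum>l<M. A i j k l (s, y (Suc j)) * vT l s)
                                        * snd (w k (s, y (Suc j))))
      - integral {x i..x (Suc i)} (\<lambda>s. (\<Sum>l<M. A i j k l (s, y j) * vB l s)
                                        * snd (w k (s, y j))))
   = 0)"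

definition l2sq :: "(nat \<Rightarrow> real) \<Rightarrow> (nat \<Rightarrow> real) \<Rightarrow> nat \<Rightarrow> nat \<Rightarrow> nat
   \<Rightarrow> (nat \<Rightarrow> nat \<Rightarrow> nat \<Rightarrow> real \<times> real \<Rightarrow> 'a :: real_normed_vector) \<Rightarrow> real" where
  "l2sq x y Nx Ny M f = (\<Sum>i<Nx. \<Sum>j<Ny. \<Sum>k<M. integral (cell x y i j) (\<lambda>z. (norm (f k i j z))\<^sup>2))"

text \<open>Discrete energy E_h^n (for n >= 1).\<close>
definition energy :: "(nat \<Rightarrow> real) \<Rightarrow> (nat \<Rightarrow> real) \<Rightarrow> nat \<Rightarrow> nat \<Rightarrow> nat \<Rightarrow> real
   \<Rightarrow> (nat \<Rightarrow> nat \<Rightarrow> nat \<Rightarrow> nat \<Rightarrow> real \<times> real \<Rightarrow> real)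
   \<Rightarrow> (nat \<Rightarrow> nat \<Rightarrow> nat \<Rightarrow> nat \<Rightarrow> real \<times> real \<Rightarrow> real \<times> real) \<Rightarrow> nat \<Rightarrow> real" where
  "energy x y Nx Ny M dt v S n =
     l2sq x y Nx Ny M (\<lambda>k i j z. (v n k i j z - v (n - 1) k i j z) / dt)
   + l2sq x y Nx Ny M (\<lambda>k i j z. (1 / 2) *\<^sub>R (S n k i j z + S (n - 1) k i j z))
   - dt ^ 2 / 4 * l2sq x y Nx Ny M (\<lambda>k i j z. (1 / dt) *\<^sub>R (S n k i j z - S (n - 1) k i j z))"

end

theory Submission
  imports Defs
begin

text \<open>
  Test the first equation at time level \<open>n\<close> with \<open>p = v\<^sup>m\<close>, the second one at level \<open>m\<close>
  with \<open>w = S\<^sup>n\<close>, and add. As \<open>A\<close> is symmetric, the three volume integrals combine into the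
  integral of the divergence of \<open>\<Sum>\<^sub>k\<^sub>l a\<^sub>k\<^sub>l v\<^sup>m\<^sub>l S\<^sup>n\<^sub>k\<close>, so Green's formula on each cell leaves
  only edge terms. On every edge the Green term cancels the boundary term of the equation that
  takes its traces from the cell itself. With alternating traces, what remains in a cell is
  the flux through its right and upper interfaces minus the flux through its left and lower
  ones, each interface flux being shared by the two adjacent cells; on \<open>\<partial>D\<close> there is no flux
  because the second equation sees \<open>v = 0\<close> there. Summing over the mesh therefore gives
  \<open>(\<delta>\<^sup>2 v\<^sup>n, v\<^sup>m) + (S\<^sup>m, S\<^sup>n) = 0\<close> for every \<open>m\<close>, \<open>\<delta>\<^sup>2\<close> being the second difference quotient
  in time. The instances \<open>m = n + 1\<close> and \<open>m = n - 1\<close> subtract to \<open>E\<^sup>n\<^sup>+\<^sup>1 - E\<^sup>n\<close> by the identities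
  \<open>|(a + b)/2|\<^sup>2 - (\<Delta>t)\<^sup>2/4 |(a - b)/\<Delta>t|\<^sup>2 = a \<cdot> b\<close> and
  \<open>|(a - b)/\<Delta>t|\<^sup>2 - |(b - c)/\<Delta>t|\<^sup>2 = \<delta>\<^sup>2 (a - c)\<close>.
\<close>

lemma Ck_subset: "Ck n f U \<Longrightarrow> V \<subseteq> U \<Longrightarrow> Ck n f V"
  by (induction n arbitrary: f) (auto intro: continuous_on_subset)

lemma smooth_near_common_C1:
  assumes "\<And>k l. k < M \<Longrightarrow> l < M \<Longrightarrow> smooth_near (B k l) K"
  obtains U where "K \<subseteq> U" "\<And>k l. k < M \<Longrightarrow> l < M \<Longrightarrow> Ck (Suc 0) (B k l) U"
proof -
  have "\<forall>k<M. \<forall>l<M. \<exists>U. K \<subseteq> U \<and> Ck (Suc 0) (B k l) U"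
    using assms unfolding smooth_near_def by blast
  then obtain V where V: "\<And>k l. k < M \<Longrightarrow> l < M \<Longrightarrow> K \<subseteq> V k l \<and> Ck (Suc 0) (B k l) (V k l)"
    by metis
  show thesis
  proof (rule that)
    show "K \<subseteq> (\<Inter>k<M. \<Inter>l<M. V k l)"
      using V by blast
    fix k l assume "k < M" "l < M"
    then have "(\<Inter>k<M. \<Inter>l<M. V k l) \<subseteq> V k l"
      by blast
    with V[OF \<open>k < M\<close> \<open>l < M\<close>] show "Ck (Suc 0) (B k l) (\<Inter>k<M. \<Inter>l<M. V k l)"
      by (blast intro: Ck_subset)
  qed
qed

lemma C1_has_derivative_x:
  assumes "Ck (Suc 0) f U" "z \<in> U"
  shows "((\<lambda>s. f (s, snd z)) has_real_derivative pdx f z) (at (fst z))"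
  using assms unfolding pdx_def by (simp add: DERIV_deriv_iff_real_differentiable)

lemma C1_has_derivative_y:
  assumes "Ck (Suc 0) f U" "z \<in> U"
  shows "((\<lambda>t. f (fst z, t)) has_real_derivative pdy f z) (at (snd z))"
  using assms unfolding pdy_def by (simp add: DERIV_deriv_iff_real_differentiable)

lemma pdx_mult:
  assumes "Ck (Suc 0) f U" "Ck (Suc 0) g U" "z \<in> U"
  shows "pdx (\<lambda>z. f z * g z) z = pdx f z * g z + f z * pdx g z"
  unfolding pdx_def[of "\<lambda>z. f z * g z"]
  using DERIV_mult[OF C1_has_derivative_x[OF assms(1,3)] C1_has_derivative_x[OF assms(2,3)]]
  by (simp add: DERIV_imp_deriv mult.commute)

lemma pdy_mult:
  assumes "Ck (Suc 0) f U" "Ck (Suc 0) g U" "z \<in> U"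
  shows "pdy (\<lambda>z. f z * g z) z = pdy f z * g z + f z * pdy g z"
  unfolding pdy_def[of "\<lambda>z. f z * g z"]
  using DERIV_mult[OF C1_has_derivative_y[OF assms(1,3)] C1_has_derivative_y[OF assms(2,3)]]
  by (simp add: DERIV_imp_deriv mult.commute)

lemma C1_mult:
  assumes f: "Ck (Suc 0) f U" and g: "Ck (Suc 0) g U"
  shows "Ck (Suc 0) (\<lambda>z. f z * g z) U"
proof -
  have "continuous_on U (\<lambda>z. pdx f z * g z + f z * pdx g z)"
    and "continuous_on U (\<lambda>z. pdy f z * g z + f z * pdy g z)"
    using f g by (auto intro: continuous_on_add continuous_on_mult)
  then have "continuous_on U (pdx (\<lambda>z. f z * g z))" "continuous_on U (pdy (\<lambda>z. f z * g z))"
    by (auto elim!: continuous_on_cong[THEN iffD1, rotated] simp: pdx_mult[OF f g] pdy_mult[OF f g])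
  with f g show ?thesis
    by (auto intro: continuous_on_mult differentiable_mult)
qed

lemma C1_continuous_on: "Ck (Suc 0) f U \<Longrightarrow> continuous_on U f"
  by simp

lemma C1_continuous_on_pdx: "Ck (Suc 0) f U \<Longrightarrow> continuous_on U (pdx f)"
  by simp

lemma C1_continuous_on_pdy: "Ck (Suc 0) f U \<Longrightarrow> continuous_on U (pdy f)"
  by simp

lemma C1_continuous_on_grad: "Ck (Suc 0) f U \<Longrightarrow> continuous_on U (grad f)"
  unfolding grad_def by (auto intro: continuous_on_Pair)

lemma C1_continuous_on_dive:
  "Ck (Suc 0) (\<lambda>z. fst (Q z)) U \<Longrightarrow> Ck (Suc 0) (\<lambda>z. snd (Q z)) U \<Longrightarrow> continuous_on U (dive Q)"
  unfolding dive_def by (auto intro: continuous_on_add)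

lemma C1_components_continuous_on:
  "Ck (Suc 0) (\<lambda>z. fst (Q z)) U \<Longrightarrow> Ck (Suc 0) (\<lambda>z. snd (Q z)) U \<Longrightarrow> continuous_on U Q"
  using continuous_on_Pair[of U "\<lambda>z. fst (Q z)" "\<lambda>z. snd (Q z)"] by simp

lemma grad_mult:
  assumes "Ck (Suc 0) f U" "Ck (Suc 0) g U" "z \<in> U"
  shows "grad (\<lambda>z. f z * g z) z = g z *\<^sub>R grad f z + f z *\<^sub>R grad g z"
  using pdx_mult[OF assms] pdy_mult[OF assms] by (simp add: grad_def algebra_simps)

lemma dive_scaleR:
  assumes "Ck (Suc 0) f U" "Ck (Suc 0) (\<lambda>z. fst (Q z)) U" "Ck (Suc 0) (\<lambda>z. snd (Q z)) U" "z \<in> U"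
  shows "dive (\<lambda>z. f z *\<^sub>R Q z) z = grad f z \<bullet> Q z + f z * dive Q z"
  using pdx_mult[OF assms(1,2,4)] pdy_mult[OF assms(1,3,4)]
  by (simp add: dive_def grad_def inner_prod_def algebra_simps)

lemma poly2_C1:
  assumes "poly2 k f"
  shows "Ck (Suc 0) f U"
proof -
  obtain c where c: "\<And>a b. f (a, b) = (\<Sum>i\<le>k. \<Sum>j\<le>k - i. c i j * a ^ i * b ^ j)"
    using assms unfolding poly2_def by blast
  define fx where "fx a b = (\<Sum>i\<le>k. \<Sum>j\<le>k - i. c i j * (of_nat i * a ^ (i - 1)) * b ^ j)" for a b
  define fy where "fy a b = (\<Sum>i\<le>k. \<Sum>j\<le>k - i. c i j * a ^ i * (of_nat j * b ^ (j - 1)))" for a b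
  have dx: "((\<lambda>s. f (s, b)) has_real_derivative fx a b) (at a)" for a b
    unfolding c fx_def by (auto intro!: derivative_eq_intros sum.cong simp: mult_ac)
  have dy: "((\<lambda>t. f (a, t)) has_real_derivative fy a b) (at b)" for a b
    unfolding c fy_def by (auto intro!: derivative_eq_intros sum.cong simp: mult_ac)
  have "\<forall>z\<in>U. (\<lambda>s. f (s, snd z)) differentiable (at (fst z)) \<and>
                (\<lambda>t. f (fst z, t)) differentiable (at (snd z))"
    using dx dy real_differentiable_def by blast
  moreover have "f = (\<lambda>z. \<Sum>i\<le>k. \<Sum>j\<le>k - i. c i j * fst z ^ i * snd z ^ j)"
    using c by (auto simp: fun_eq_iff)
  moreover have "pdx f = (\<lambda>z. fx (fst z) (snd z))" "pdy f = (\<lambda>z. fy (fst z) (snd z))"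
    using dx dy by (auto simp: fun_eq_iff pdx_def pdy_def DERIV_imp_deriv)
  ultimately show ?thesis
    by (simp add: fx_def fy_def) (intro conjI continuous_intros)
qed

lemma poly2_continuous_on: "poly2 k f \<Longrightarrow> continuous_on U f"
  by (rule C1_continuous_on[OF poly2_C1])

lemma poly2_pair_continuous_on:
  "poly2 k (\<lambda>z. fst (f z)) \<Longrightarrow> poly2 k (\<lambda>z. snd (f z)) \<Longrightarrow> continuous_on U f"
  by (rule C1_components_continuous_on[OF poly2_C1 poly2_C1])

declare Ck.simps(2) [simp del]

section \<open>Green's formula on a rectangle\<close>

lemma continuous_on_vertical_segment:
  fixes a b c d s :: real
  assumes "continuous_on (cbox (a,b) (c,d)) h" "s \<in> {a..c}"
  shows "continuous_on {b..d} (\<lambda>t. h (s,t))"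
  by (rule continuous_on_compose2[OF assms(1) continuous_on_Pair[OF continuous_on_const continuous_on_id]])
     (use assms(2) in auto)

lemma continuous_on_horizontal_segment:
  fixes a b c d t :: real
  assumes "continuous_on (cbox (a,b) (c,d)) h" "t \<in> {b..d}"
  shows "continuous_on {a..c} (\<lambda>s. h (s,t))"
  by (rule continuous_on_compose2[OF assms(1) continuous_on_Pair[OF continuous_on_id continuous_on_const]])
     (use assms(2) in auto)

lemma integral_pdx_cbox:
  assumes F: "Ck (Suc 0) F U" and K: "cbox (a,b) (c,d) \<subseteq> U" and "a \<le> c"
  shows "integral (cbox (a,b) (c,d)) (pdx F) = integral {b..d} (\<lambda>t. F (c,t) - F (a,t))"
proof -
  have cont: "continuous_on (cbox (a,b) (c,d)) (pdx F)"
    using C1_continuous_on_pdx[OF F] K by (rule continuous_on_subset)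
  have "integral (cbox (a,b) (c,d)) (pdx F)
      = integral (cbox a c) (\<lambda>s. integral (cbox b d) (\<lambda>t. pdx F (s,t)))"
    by (rule integral_prod_continuous[OF cont])
  also have "\<dots> = integral (cbox b d) (\<lambda>t. integral (cbox a c) (\<lambda>s. pdx F (s,t)))"
    by (rule integral_swap_continuous) (use cont in \<open>simp add: case_prod_beta'\<close>)
  also have "\<dots> = integral {b..d} (\<lambda>t. F (c,t) - F (a,t))"
    unfolding cbox_interval
  proof (intro integral_cong integral_unique fundamental_theorem_of_calculus)
    fix s t assume "t \<in> {b..d}" "s \<in> {a..c}"
    with K have "(s,t) \<in> U" by auto
    from C1_has_derivative_x[OF F this]
    show "((\<lambda>s. F (s, t)) has_vector_derivative pdx F (s, t)) (at s within {a..c})"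
      by (simp add: has_real_derivative_iff_has_vector_derivative has_vector_derivative_at_within)
  qed (rule \<open>a \<le> c\<close>)
  finally show ?thesis .
qed

lemma integral_pdy_cbox:
  assumes F: "Ck (Suc 0) F U" and K: "cbox (a,b) (c,d) \<subseteq> U" and "b \<le> d"
  shows "integral (cbox (a,b) (c,d)) (pdy F) = integral {a..c} (\<lambda>s. F (s,d) - F (s,b))"
proof -
  have cont: "continuous_on (cbox (a,b) (c,d)) (pdy F)"
    using C1_continuous_on_pdy[OF F] K by (rule continuous_on_subset)
  have "integral (cbox (a,b) (c,d)) (pdy F)
      = integral (cbox a c) (\<lambda>s. integral (cbox b d) (\<lambda>t. pdy F (s,t)))"
    by (rule integral_prod_continuous[OF cont])
  also have "\<dots> = integral {a..c} (\<lambda>s. F (s,d) - F (s,b))"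
    unfolding cbox_interval
  proof (intro integral_cong integral_unique fundamental_theorem_of_calculus)
    fix s t assume "s \<in> {a..c}" "t \<in> {b..d}"
    with K have "(s,t) \<in> U" by auto
    from C1_has_derivative_y[OF F this]
    show "((\<lambda>t. F (s, t)) has_vector_derivative pdy F (s, t)) (at t within {b..d})"
      by (simp add: has_real_derivative_iff_has_vector_derivative has_vector_derivative_at_within)
  qed (rule \<open>b \<le> d\<close>)
  finally show ?thesis .
qed

lemma divergence_theorem_cbox:
  assumes Q1: "Ck (Suc 0) (\<lambda>z. fst (Q z)) U" and Q2: "Ck (Suc 0) (\<lambda>z. snd (Q z)) U"
    and K: "cbox (a,b) (c,d) \<subseteq> U" "a \<le> c" "b \<le> d"
  shows "integral (cbox (a,b) (c,d)) (dive Q)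
       = integral {b..d} (\<lambda>t. fst (Q (c,t))) - integral {b..d} (\<lambda>t. fst (Q (a,t)))
       + integral {a..c} (\<lambda>s. snd (Q (s,d))) - integral {a..c} (\<lambda>s. snd (Q (s,b)))"
proof -
  have cQ1: "continuous_on (cbox (a,b) (c,d)) (\<lambda>z. fst (Q z))"
    and cQ2: "continuous_on (cbox (a,b) (c,d)) (\<lambda>z. snd (Q z))"
    using C1_continuous_on[OF Q1] C1_continuous_on[OF Q2] K(1) by (auto intro: continuous_on_subset)
  have int1: "(\<lambda>t. fst (Q (s,t))) integrable_on {b..d}" if "s \<in> {a..c}" for s
    using continuous_on_vertical_segment[OF cQ1 that] by (rule integrable_continuous_interval)
  have int2: "(\<lambda>s. snd (Q (s,t))) integrable_on {a..c}" if "t \<in> {b..d}" for t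
    using continuous_on_horizontal_segment[OF cQ2 that] by (rule integrable_continuous_interval)
  have edges:
      "integral {b..d} (\<lambda>t. fst (Q (c,t)) - fst (Q (a,t)))
         = integral {b..d} (\<lambda>t. fst (Q (c,t))) - integral {b..d} (\<lambda>t. fst (Q (a,t)))"
      "integral {a..c} (\<lambda>s. snd (Q (s,d)) - snd (Q (s,b)))
         = integral {a..c} (\<lambda>s. snd (Q (s,d))) - integral {a..c} (\<lambda>s. snd (Q (s,b)))"
    by (intro integral_diff int1 int2; use K(2,3) in simp)+
  have "integral (cbox (a,b) (c,d)) (dive Q)
      = integral (cbox (a,b) (c,d)) (pdx (\<lambda>z. fst (Q z)))
      + integral (cbox (a,b) (c,d)) (pdy (\<lambda>z. snd (Q z)))"
    unfolding dive_def using C1_continuous_on_pdx[OF Q1] C1_continuous_on_pdy[OF Q2] K(1)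
    by (intro integral_add integrable_continuous) (auto intro: continuous_on_subset)
  also have "\<dots> = integral {b..d} (\<lambda>t. fst (Q (c,t)) - fst (Q (a,t)))
                + integral {a..c} (\<lambda>s. snd (Q (s,d)) - snd (Q (s,b)))"
    using integral_pdx_cbox[OF Q1 K(1,2)] integral_pdy_cbox[OF Q2 K(1,3)] by simp
  also have "\<dots> = integral {b..d} (\<lambda>t. fst (Q (c,t))) - integral {b..d} (\<lambda>t. fst (Q (a,t)))
       + integral {a..c} (\<lambda>s. snd (Q (s,d))) - integral {a..c} (\<lambda>s. snd (Q (s,b)))"
    unfolding edges by simp
  finally show ?thesis .
qed

lemma green_cbox:
  assumes f: "Ck (Suc 0) f U"
    and Q1: "Ck (Suc 0) (\<lambda>z. fst (Q z)) U" and Q2: "Ck (Suc 0) (\<lambda>z. snd (Q z)) U"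
    and K: "cbox (a,b) (c,d) \<subseteq> U" "a \<le> c" "b \<le> d"
  shows "integral (cbox (a,b) (c,d)) (\<lambda>z. grad f z \<bullet> Q z + f z * dive Q z)
       = integral {b..d} (\<lambda>t. f (c,t) * fst (Q (c,t))) - integral {b..d} (\<lambda>t. f (a,t) * fst (Q (a,t)))
       + integral {a..c} (\<lambda>s. f (s,d) * snd (Q (s,d))) - integral {a..c} (\<lambda>s. f (s,b) * snd (Q (s,b)))"
proof -
  have fQ1: "Ck (Suc 0) (\<lambda>z. fst (f z *\<^sub>R Q z)) U" and fQ2: "Ck (Suc 0) (\<lambda>z. snd (f z *\<^sub>R Q z)) U"
    using C1_mult[OF f Q1] C1_mult[OF f Q2] by simp_all
  have "integral (cbox (a,b) (c,d)) (\<lambda>z. grad f z \<bullet> Q z + f z * dive Q z)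
      = integral (cbox (a,b) (c,d)) (dive (\<lambda>z. f z *\<^sub>R Q z))"
    using K(1) by (intro integral_cong) (auto simp: dive_scaleR[OF f Q1 Q2])
  then show ?thesis
    using divergence_theorem_cbox[OF fQ1 fQ2 K] by simp
qed

section \<open>Green's formula with a symmetric matrix weight\<close>

lemma sum_swap_symmetric:
  fixes B F :: "nat \<Rightarrow> nat \<Rightarrow> 'a::semiring_0"
  assumes "\<And>k l. k < M \<Longrightarrow> l < M \<Longrightarrow> B k l = B l k"
  shows "(\<Sum>k<M. \<Sum>l<M. B k l * F k l) = (\<Sum>k<M. \<Sum>l<M. B k l * F l k)"
  by (subst sum.swap) (auto intro!: sum.cong simp: assms)

text \<open>The edge term \<open>(B f, g)\<^sub>e\<close>, the edge \<open>e\<close> being parametrised by the interval \<open>I\<close>.\<close>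

definition edge_form :: "nat \<Rightarrow> real set \<Rightarrow> (nat \<Rightarrow> nat \<Rightarrow> real \<Rightarrow> real)
    \<Rightarrow> (nat \<Rightarrow> real \<Rightarrow> real) \<Rightarrow> (nat \<Rightarrow> real \<Rightarrow> real) \<Rightarrow> real" where
  "edge_form M I B f g = (\<Sum>k<M. integral I (\<lambda>t. (\<Sum>l<M. B k l t * f l t) * g k t))"

lemma edge_form_eq_double_sum:
  assumes "\<And>k l. k < M \<Longrightarrow> l < M \<Longrightarrow> (\<lambda>t. B k l t * f l t * g k t) integrable_on I"
  shows "edge_form M I B f g = (\<Sum>k<M. \<Sum>l<M. integral I (\<lambda>t. B k l t * f l t * g k t))"
  unfolding edge_form_def sum_distrib_right by (intro sum.cong refl integral_sum) (auto intro: assms)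

lemma edge_form_sym:
  fixes a b :: real
  assumes B: "\<And>k l. k < M \<Longrightarrow> l < M \<Longrightarrow> continuous_on {a..b} (B k l)"
    and B_sym: "\<And>k l t. k < M \<Longrightarrow> l < M \<Longrightarrow> t \<in> {a..b} \<Longrightarrow> B k l t = B l k t"
    and f: "\<And>l. l < M \<Longrightarrow> continuous_on {a..b} (f l)"
    and g: "\<And>k. k < M \<Longrightarrow> continuous_on {a..b} (g k)"
  shows "edge_form M {a..b} B f g = edge_form M {a..b} B g f"
proof -
  have "edge_form M {a..b} B f g = (\<Sum>k<M. \<Sum>l<M. integral {a..b} (\<lambda>t. B k l t * f l t * g k t))"
    by (intro edge_form_eq_double_sum integrable_continuous_interval continuous_intros B f g)
  also have "\<dots> = (\<Sum>k<M. \<Sum>l<M. integral {a..b} (\<lambda>t. B l k t * g k t * f l t))"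
    using B_sym by (intro sum.cong refl integral_cong) (simp add: mult_ac)
  also have "\<dots> = edge_form M {a..b} B g f"
    by (subst sum.swap, rule edge_form_eq_double_sum[symmetric])
       (intro integrable_continuous_interval continuous_intros B f g)
  finally show ?thesis .
qed

lemma edge_form_vertical_eq_double_sum:
  fixes a b c d s :: real
  assumes s: "s \<in> {a..c}"
    and cont: "\<And>k l. k < M \<Longrightarrow> l < M \<Longrightarrow> continuous_on (cbox (a,b) (c,d)) (\<lambda>z. B k l z * f l z * g k z)"
  shows "edge_form M {b..d} (\<lambda>k l t. B k l (s,t)) (\<lambda>l t. f l (s,t)) (\<lambda>k t. g k (s,t))
       = (\<Sum>k<M. \<Sum>l<M. integral {b..d} (\<lambda>t. B k l (s,t) * f l (s,t) * g k (s,t)))"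
proof (rule edge_form_eq_double_sum)
  fix k l assume "k < M" "l < M"
  from continuous_on_vertical_segment[OF cont[OF this] s]
  show "(\<lambda>t. B k l (s,t) * f l (s,t) * g k (s,t)) integrable_on {b..d}"
    by (rule integrable_continuous_interval)
qed

lemma edge_form_horizontal_eq_double_sum:
  fixes a b c d t :: real
  assumes t: "t \<in> {b..d}"
    and cont: "\<And>k l. k < M \<Longrightarrow> l < M \<Longrightarrow> continuous_on (cbox (a,b) (c,d)) (\<lambda>z. B k l z * f l z * g k z)"
  shows "edge_form M {a..c} (\<lambda>k l s. B k l (s,t)) (\<lambda>l s. f l (s,t)) (\<lambda>k s. g k (s,t))
       = (\<Sum>k<M. \<Sum>l<M. integral {a..c} (\<lambda>s. B k l (s,t) * f l (s,t) * g k (s,t)))"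
proof (rule edge_form_eq_double_sum)
  fix k l assume "k < M" "l < M"
  from continuous_on_horizontal_segment[OF cont[OF this] t]
  show "(\<lambda>s. B k l (s,t) * f l (s,t) * g k (s,t)) integrable_on {a..c}"
    by (rule integrable_continuous_interval)
qed

lemma matrix_product_rule:
  fixes B :: "nat \<Rightarrow> nat \<Rightarrow> real \<times> real \<Rightarrow> real" and P :: "nat \<Rightarrow> real \<times> real \<Rightarrow> real"
    and Q :: "nat \<Rightarrow> real \<times> real \<Rightarrow> real \<times> real"
  assumes B: "\<And>k l. k < M \<Longrightarrow> l < M \<Longrightarrow> Ck (Suc 0) (B k l) U"
    and P: "\<And>k. k < M \<Longrightarrow> Ck (Suc 0) (P k) U" and "z \<in> U"
    and B_sym: "\<And>k l. k < M \<Longrightarrow> l < M \<Longrightarrow> B k l z = B l k z"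
  shows "(\<Sum>k<M. (\<Sum>l<M. B k l z *\<^sub>R Q l z) \<bullet> grad (P k) z)
       + (\<Sum>k<M. (\<Sum>l<M. B k l z * P l z) * dive (Q k) z)
       + (\<Sum>k<M. (\<Sum>l<M. P l z *\<^sub>R grad (B k l) z) \<bullet> Q k z)
     = (\<Sum>k<M. \<Sum>l<M. grad (\<lambda>z. B k l z * P l z) z \<bullet> Q k z + B k l z * P l z * dive (Q k) z)"
proof -
  have "(\<Sum>k<M. \<Sum>l<M. B k l z * (Q l z \<bullet> grad (P k) z))
      = (\<Sum>k<M. \<Sum>l<M. B k l z * (Q k z \<bullet> grad (P l) z))"
    using B_sym by (rule sum_swap_symmetric)
  moreover have "grad (\<lambda>z. B k l z * P l z) z \<bullet> Q k z
      = P l z * (grad (B k l) z \<bullet> Q k z) + B k l z * (Q k z \<bullet> grad (P l) z)" if "k < M" "l < M" for k l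
    unfolding grad_mult[OF B[OF that] P[OF that(2)] \<open>z \<in> U\<close>]
    by (simp add: inner_add_right inner_commute)
  ultimately show ?thesis
    by (simp add: inner_sum_left sum_distrib_left sum_distrib_right sum.distrib[symmetric] algebra_simps)
qed

lemma green_cbox_double_sum:
  fixes B :: "nat \<Rightarrow> nat \<Rightarrow> real \<times> real \<Rightarrow> real" and P :: "nat \<Rightarrow> real \<times> real \<Rightarrow> real"
    and Q :: "nat \<Rightarrow> real \<times> real \<Rightarrow> real \<times> real"
  assumes K: "cbox (a,b) (c,d) \<subseteq> U" "a \<le> c" "b \<le> d"
    and B: "\<And>k l. k < M \<Longrightarrow> l < M \<Longrightarrow> Ck (Suc 0) (B k l) U"
    and P: "\<And>k. k < M \<Longrightarrow> Ck (Suc 0) (P k) U"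
    and Q1: "\<And>k. k < M \<Longrightarrow> Ck (Suc 0) (\<lambda>z. fst (Q k z)) U"
    and Q2: "\<And>k. k < M \<Longrightarrow> Ck (Suc 0) (\<lambda>z. snd (Q k z)) U"
  shows "(\<Sum>k<M. \<Sum>l<M. integral (cbox (a,b) (c,d))
            (\<lambda>z. grad (\<lambda>z. B k l z * P l z) z \<bullet> Q k z + B k l z * P l z * dive (Q k) z))
     = edge_form M {b..d} (\<lambda>k l t. B k l (c,t)) (\<lambda>l t. P l (c,t)) (\<lambda>k t. fst (Q k (c,t)))
     - edge_form M {b..d} (\<lambda>k l t. B k l (a,t)) (\<lambda>l t. P l (a,t)) (\<lambda>k t. fst (Q k (a,t)))
     + edge_form M {a..c} (\<lambda>k l s. B k l (s,d)) (\<lambda>l s. P l (s,d)) (\<lambda>k s. snd (Q k (s,d)))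
     - edge_form M {a..c} (\<lambda>k l s. B k l (s,b)) (\<lambda>l s. P l (s,b)) (\<lambda>k s. snd (Q k (s,b)))"
proof -
  have "continuous_on (cbox (a,b) (c,d)) (\<lambda>z. B k l z * P l z * fst (Q k z))"
    "continuous_on (cbox (a,b) (c,d)) (\<lambda>z. B k l z * P l z * snd (Q k z))" if "k < M" "l < M" for k l
    using C1_continuous_on[OF C1_mult[OF C1_mult[OF B[OF that] P[OF that(2)]] Q1[OF that(1)]]]
      C1_continuous_on[OF C1_mult[OF C1_mult[OF B[OF that] P[OF that(2)]] Q2[OF that(1)]]] K(1)
    by (auto intro: continuous_on_subset)
  note cont = this
  have vertical: "edge_form M {b..d} (\<lambda>k l t. B k l (s,t)) (\<lambda>l t. P l (s,t)) (\<lambda>k t. fst (Q k (s,t)))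
      = (\<Sum>k<M. \<Sum>l<M. integral {b..d} (\<lambda>t. B k l (s,t) * P l (s,t) * fst (Q k (s,t))))"
    if "s \<in> {a..c}" for s
    using that cont(1) by (rule edge_form_vertical_eq_double_sum)
  have horizontal: "edge_form M {a..c} (\<lambda>k l s. B k l (s,t)) (\<lambda>l s. P l (s,t)) (\<lambda>k s. snd (Q k (s,t)))
      = (\<Sum>k<M. \<Sum>l<M. integral {a..c} (\<lambda>s. B k l (s,t) * P l (s,t) * snd (Q k (s,t))))"
    if "t \<in> {b..d}" for t
    using that cont(2) by (rule edge_form_horizontal_eq_double_sum)
  have "integral (cbox (a,b) (c,d))
          (\<lambda>z. grad (\<lambda>z. B k l z * P l z) z \<bullet> Q k z + B k l z * P l z * dive (Q k) z)
      = integral {b..d} (\<lambda>t. B k l (c,t) * P l (c,t) * fst (Q k (c,t)))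
      - integral {b..d} (\<lambda>t. B k l (a,t) * P l (a,t) * fst (Q k (a,t)))
      + integral {a..c} (\<lambda>s. B k l (s,d) * P l (s,d) * snd (Q k (s,d)))
      - integral {a..c} (\<lambda>s. B k l (s,b) * P l (s,b) * snd (Q k (s,b)))"
    if "k < M" "l < M" for k l
    using green_cbox[OF C1_mult[OF B[OF that] P[OF that(2)]] Q1[OF that(1)] Q2[OF that(1)] K] by simp
  then show ?thesis
    using K(2,3) by (simp add: vertical horizontal sum.distrib sum_subtractf)
qed

lemma matrix_green_cbox:
  fixes B :: "nat \<Rightarrow> nat \<Rightarrow> real \<times> real \<Rightarrow> real" and P :: "nat \<Rightarrow> real \<times> real \<Rightarrow> real"
    and Q :: "nat \<Rightarrow> real \<times> real \<Rightarrow> real \<times> real"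
  assumes K: "cbox (a,b) (c,d) \<subseteq> U" "a \<le> c" "b \<le> d"
    and B: "\<And>k l. k < M \<Longrightarrow> l < M \<Longrightarrow> Ck (Suc 0) (B k l) U"
    and B_sym: "\<And>k l z. k < M \<Longrightarrow> l < M \<Longrightarrow> z \<in> cbox (a,b) (c,d) \<Longrightarrow> B k l z = B l k z"
    and P: "\<And>k. k < M \<Longrightarrow> Ck (Suc 0) (P k) U"
    and Q1: "\<And>k. k < M \<Longrightarrow> Ck (Suc 0) (\<lambda>z. fst (Q k z)) U"
    and Q2: "\<And>k. k < M \<Longrightarrow> Ck (Suc 0) (\<lambda>z. snd (Q k z)) U"
  shows "(\<Sum>k<M. integral (cbox (a,b) (c,d)) (\<lambda>z. (\<Sum>l<M. B k l z *\<^sub>R Q l z) \<bullet> grad (P k) z))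
       + (\<Sum>k<M. integral (cbox (a,b) (c,d)) (\<lambda>z. (\<Sum>l<M. B k l z * P l z) * dive (Q k) z))
       + (\<Sum>k<M. integral (cbox (a,b) (c,d)) (\<lambda>z. (\<Sum>l<M. P l z *\<^sub>R grad (B k l) z) \<bullet> Q k z))
     = edge_form M {b..d} (\<lambda>k l t. B k l (c,t)) (\<lambda>l t. P l (c,t)) (\<lambda>k t. fst (Q k (c,t)))
     - edge_form M {b..d} (\<lambda>k l t. B k l (a,t)) (\<lambda>l t. P l (a,t)) (\<lambda>k t. fst (Q k (a,t)))
     + edge_form M {a..c} (\<lambda>k l s. B k l (s,d)) (\<lambda>l s. P l (s,d)) (\<lambda>k s. snd (Q k (s,d)))
     - edge_form M {a..c} (\<lambda>k l s. B k l (s,b)) (\<lambda>l s. P l (s,b)) (\<lambda>k s. snd (Q k (s,b)))"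
    (is "?lhs = _")
proof -
  define K where "K = cbox (a,b) (c,d)"
  define green where
    "green k l z = grad (\<lambda>z. B k l z * P l z) z \<bullet> Q k z + B k l z * P l z * dive (Q k) z" for k l z
  have KU: "K \<subseteq> U"
    using K(1) unfolding K_def .
  have cB: "continuous_on K (B k l)" "continuous_on K (grad (B k l))" if "k < M" "l < M" for k l
    using B[OF that]
    by (intro continuous_on_subset[OF _ KU] C1_continuous_on C1_continuous_on_grad; assumption)+
  have cP: "continuous_on K (P k)" "continuous_on K (grad (P k))" if "k < M" for k
    using P[OF that]
    by (intro continuous_on_subset[OF _ KU] C1_continuous_on C1_continuous_on_grad; assumption)+
  have cQ: "continuous_on K (Q k)" "continuous_on K (dive (Q k))" if "k < M" for k
    using C1_components_continuous_on[OF Q1[OF that] Q2[OF that]]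
      C1_continuous_on_dive[OF Q1[OF that] Q2[OF that]] KU
    by (auto intro: continuous_on_subset)
  have cBP: "continuous_on K (grad (\<lambda>z. B k l z * P l z))" if "k < M" "l < M" for k l
    using C1_mult[OF B[OF that] P[OF that(2)]]
    by (intro continuous_on_subset[OF _ KU] C1_continuous_on_grad)
  have int: "g integrable_on K" if "continuous_on K g" for g :: "_ \<Rightarrow> real"
    using that unfolding K_def by (rule integrable_continuous)
  have "?lhs = integral K (\<lambda>z. (\<Sum>k<M. (\<Sum>l<M. B k l z *\<^sub>R Q l z) \<bullet> grad (P k) z)
      + (\<Sum>k<M. (\<Sum>l<M. B k l z * P l z) * dive (Q k) z)
      + (\<Sum>k<M. (\<Sum>l<M. P l z *\<^sub>R grad (B k l) z) \<bullet> Q k z))"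
  proof -
    have "(\<lambda>z. (\<Sum>l<M. B k l z *\<^sub>R Q l z) \<bullet> grad (P k) z) integrable_on K"
      "(\<lambda>z. (\<Sum>l<M. B k l z * P l z) * dive (Q k) z) integrable_on K"
      "(\<lambda>z. (\<Sum>l<M. P l z *\<^sub>R grad (B k l) z) \<bullet> Q k z) integrable_on K" if "k \<in> {..<M}" for k
      using that by (intro int continuous_intros cB cP cQ; simp)+
    then show ?thesis
      unfolding K_def[symmetric]
      by (intro integral_unique[symmetric] has_integral_add has_integral_sum finite_lessThan
          integrable_integral)
  qed
  also have "\<dots> = integral K (\<lambda>z. \<Sum>k<M. \<Sum>l<M. green k l z)"
    using KU B_sym unfolding green_def K_def
    by (intro integral_cong matrix_product_rule[OF B P]) auto
  also have "\<dots> = (\<Sum>k<M. \<Sum>l<M. integral K (green k l))"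
  proof -
    have "green k l integrable_on K" if "k \<in> {..<M}" "l \<in> {..<M}" for k l
      unfolding green_def using that by (intro int continuous_intros cBP cB cP cQ; simp)+
    then show ?thesis
      by (intro integral_unique has_integral_sum finite_lessThan integrable_integral)
  qed
  finally show ?thesis
    unfolding green_def K_def using green_cbox_double_sum[OF K B P Q1 Q2] by simp
qed

section \<open>The scheme on one cell\<close>

definition cell_edge_x ::
  "(nat \<Rightarrow> real) \<Rightarrow> nat \<Rightarrow> (nat \<Rightarrow> nat \<Rightarrow> nat \<Rightarrow> nat \<Rightarrow> real \<times> real \<Rightarrow> real) \<Rightarrow> nat \<Rightarrow> nat \<Rightarrow> real
   \<Rightarrow> (nat \<Rightarrow> real \<times> real \<Rightarrow> real) \<Rightarrow> (nat \<Rightarrow> real \<times> real \<Rightarrow> real) \<Rightarrow> real" where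
  "cell_edge_x y M A i j s f g =
     edge_form M {y j..y (Suc j)} (\<lambda>k l t. A i j k l (s,t)) (\<lambda>l t. f l (s,t)) (\<lambda>k t. g k (s,t))"

definition cell_edge_y ::
  "(nat \<Rightarrow> real) \<Rightarrow> nat \<Rightarrow> (nat \<Rightarrow> nat \<Rightarrow> nat \<Rightarrow> nat \<Rightarrow> real \<times> real \<Rightarrow> real) \<Rightarrow> nat \<Rightarrow> nat \<Rightarrow> real
   \<Rightarrow> (nat \<Rightarrow> real \<times> real \<Rightarrow> real) \<Rightarrow> (nat \<Rightarrow> real \<times> real \<Rightarrow> real) \<Rightarrow> real" where
  "cell_edge_y x M A i j t f g =
     edge_form M {x i..x (Suc i)} (\<lambda>k l s. A i j k l (s,t)) (\<lambda>l s. f l (s,t)) (\<lambda>k s. g k (s,t))"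

lemma cell_edge_x_sym:
  assumes s: "s \<in> {x i..x (Suc i)}"
    and A: "\<And>k l. k < M \<Longrightarrow> l < M \<Longrightarrow> continuous_on (cell x y i j) (A i j k l)"
    and A_sym: "\<And>k l z. k < M \<Longrightarrow> l < M \<Longrightarrow> z \<in> cell x y i j \<Longrightarrow> A i j k l z = A i j l k z"
    and f: "\<And>l. l < M \<Longrightarrow> continuous_on UNIV (f l)" and g: "\<And>k. k < M \<Longrightarrow> continuous_on UNIV (g k)"
  shows "cell_edge_x y M A i j s f g = cell_edge_x y M A i j s g f"
  unfolding cell_edge_x_def using s A A_sym unfolding cell_def
  by (intro edge_form_sym continuous_on_vertical_segment continuous_on_subset[OF f subset_UNIV]
      continuous_on_subset[OF g subset_UNIV]) auto

lemma cell_edge_y_sym: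
  assumes t: "t \<in> {y j..y (Suc j)}"
    and A: "\<And>k l. k < M \<Longrightarrow> l < M \<Longrightarrow> continuous_on (cell x y i j) (A i j k l)"
    and A_sym: "\<And>k l z. k < M \<Longrightarrow> l < M \<Longrightarrow> z \<in> cell x y i j \<Longrightarrow> A i j k l z = A i j l k z"
    and f: "\<And>l. l < M \<Longrightarrow> continuous_on UNIV (f l)" and g: "\<And>k. k < M \<Longrightarrow> continuous_on UNIV (g k)"
  shows "cell_edge_y x M A i j t f g = cell_edge_y x M A i j t g f"
  unfolding cell_edge_y_def using t A A_sym unfolding cell_def
  by (intro edge_form_sym continuous_on_horizontal_segment continuous_on_subset[OF f subset_UNIV]
      continuous_on_subset[OF g subset_UNIV]) auto

text \<open>The flux \<open>(A\<^sup>- S\<^sup>- \<nu>, p)\<close> through the interface \<open>x = x\<^sub>i\<close> between the cells \<open>(i - 1, j)\<close>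
  and \<open>(i, j)\<close>: \<open>A\<close> and \<open>S\<close> are traced from the left cell, \<open>p\<close> from the right one;
  \<open>interface_flux_y\<close> is the analogue for the interface \<open>y = y\<^sub>j\<close>.\<close>

definition interface_flux_x ::
  "(nat \<Rightarrow> real) \<Rightarrow> (nat \<Rightarrow> real) \<Rightarrow> nat \<Rightarrow> (nat \<Rightarrow> nat \<Rightarrow> nat \<Rightarrow> nat \<Rightarrow> real \<times> real \<Rightarrow> real)
   \<Rightarrow> (nat \<Rightarrow> nat \<Rightarrow> nat \<Rightarrow> real \<times> real \<Rightarrow> real \<times> real) \<Rightarrow> (nat \<Rightarrow> nat \<Rightarrow> nat \<Rightarrow> real \<times> real \<Rightarrow> real)
   \<Rightarrow> nat \<Rightarrow> nat \<Rightarrow> real" where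
  "interface_flux_x x y M A T p i j =
     cell_edge_x y M A (i - 1) j (x i) (\<lambda>l z. fst (T l (i - 1) j z)) (\<lambda>k. p k i j)"

definition interface_flux_y ::
  "(nat \<Rightarrow> real) \<Rightarrow> (nat \<Rightarrow> real) \<Rightarrow> nat \<Rightarrow> (nat \<Rightarrow> nat \<Rightarrow> nat \<Rightarrow> nat \<Rightarrow> real \<times> real \<Rightarrow> real)
   \<Rightarrow> (nat \<Rightarrow> nat \<Rightarrow> nat \<Rightarrow> real \<times> real \<Rightarrow> real \<times> real) \<Rightarrow> (nat \<Rightarrow> nat \<Rightarrow> nat \<Rightarrow> real \<times> real \<Rightarrow> real)
   \<Rightarrow> nat \<Rightarrow> nat \<Rightarrow> real" where
  "interface_flux_y x y M A T p i j =
     cell_edge_y x M A i (j - 1) (y j) (\<lambda>l z. snd (T l i (j - 1) z)) (\<lambda>k. p k i j)"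

lemma eq1_cell_edge_form:
  assumes "eq1 x y M dt A v S n i j p"
  shows "(\<Sum>k<M. integral (cell x y i j)
            (\<lambda>z. (v (Suc n) k i j z - 2 * v n k i j z + v (n - 1) k i j z) / dt ^ 2 * p k z))
       + (\<Sum>k<M. integral (cell x y i j) (\<lambda>z. (\<Sum>l<M. A i j k l z *\<^sub>R S n l i j z) \<bullet> grad (p k) z))
     = cell_edge_x y M A i j (x (Suc i)) (\<lambda>l z. fst (S n l i j z)) p
     - (if i = 0 then cell_edge_x y M A i j (x i) (\<lambda>l z. fst (S n l i j z)) p
        else cell_edge_x y M A (i - 1) j (x i) (\<lambda>l z. fst (S n l (i - 1) j z)) p)
     + cell_edge_y x M A i j (y (Suc j)) (\<lambda>l z. snd (S n l i j z)) p
     - (if j = 0 then cell_edge_y x M A i j (y j) (\<lambda>l z. snd (S n l i j z)) p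
        else cell_edge_y x M A i (j - 1) (y j) (\<lambda>l z. snd (S n l i (j - 1) z)) p)"
  using assms unfolding eq1_def Let_def cell_edge_x_def cell_edge_y_def edge_form_def
  by (cases "i = 0"; cases "j = 0") (simp_all add: sum_subtractf sum.distrib)

lemma eq2_cell_edge_form:
  assumes "eq2 x y Nx Ny M A v S m i j w"
  shows "(\<Sum>k<M. integral (cell x y i j) (\<lambda>z. S m k i j z \<bullet> w k z))
       + (\<Sum>k<M. integral (cell x y i j) (\<lambda>z. (\<Sum>l<M. A i j k l z * v m l i j z) * dive (w k) z))
       + (\<Sum>k<M. integral (cell x y i j) (\<lambda>z. (\<Sum>l<M. v m l i j z *\<^sub>R grad (A i j k l) z) \<bullet> w k z))
     = (if Suc i < Nx
        then cell_edge_x y M A i j (x (Suc i)) (\<lambda>l. v m l (Suc i) j) (\<lambda>k z. fst (w k z)) else 0)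
     - (if i = 0 then 0 else cell_edge_x y M A i j (x i) (\<lambda>l. v m l i j) (\<lambda>k z. fst (w k z)))
     + (if Suc j < Ny
        then cell_edge_y x M A i j (y (Suc j)) (\<lambda>l. v m l i (Suc j)) (\<lambda>k z. snd (w k z)) else 0)
     - (if j = 0 then 0 else cell_edge_y x M A i j (y j) (\<lambda>l. v m l i j) (\<lambda>k z. snd (w k z)))"
  using assms unfolding eq2_def Let_def cell_edge_x_def cell_edge_y_def edge_form_def
  by (cases "i = 0"; cases "j = 0"; cases "Suc i < Nx"; cases "Suc j < Ny")
     (simp_all add: sum_subtractf sum.distrib sum_negf)

lemma cell_balance:
  assumes ij: "i < Nx" "j < Ny" and mesh: "x i \<le> x (Suc i)" "y j \<le> y (Suc j)"
    and A: "\<And>k l. k < M \<Longrightarrow> l < M \<Longrightarrow> Ck (Suc 0) (A i j k l) U" and cell_U: "cell x y i j \<subseteq> U"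
    and A_sym: "\<And>k l z. k < M \<Longrightarrow> l < M \<Longrightarrow> z \<in> cell x y i j \<Longrightarrow> A i j k l z = A i j l k z"
    and v_poly: "\<forall>k<M. \<forall>i<Nx. \<forall>j<Ny. poly2 deg (v m k i j)"
    and S_poly: "\<forall>k<M. poly2 deg (\<lambda>z. fst (S n k i j z)) \<and> poly2 deg (\<lambda>z. snd (S n k i j z))"
    and eq1: "eq1 x y M dt A v S n i j (\<lambda>k. v m k i j)"
    and eq2: "eq2 x y Nx Ny M A v S m i j (\<lambda>k. S n k i j)"
  shows "(\<Sum>k<M. integral (cell x y i j)
            (\<lambda>z. (v (Suc n) k i j z - 2 * v n k i j z + v (n - 1) k i j z) / dt ^ 2 * v m k i j z))
       + (\<Sum>k<M. integral (cell x y i j) (\<lambda>z. S m k i j z \<bullet> S n k i j z))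
     = ((if Suc i < Nx then interface_flux_x x y M A (S n) (v m) (Suc i) j else 0)
        - (if i = 0 then 0 else interface_flux_x x y M A (S n) (v m) i j))
     + ((if Suc j < Ny then interface_flux_y x y M A (S n) (v m) i (Suc j) else 0)
        - (if j = 0 then 0 else interface_flux_y x y M A (S n) (v m) i j))"
proof -
  define P where "P = (\<lambda>k. v m k i j)"
  define S1 where "S1 = (\<lambda>k z. fst (S n k i j z))"
  define S2 where "S2 = (\<lambda>k z. snd (S n k i j z))"
  let ?EX = "cell_edge_x y M A i j" and ?EY = "cell_edge_y x M A i j"
  have cA: "continuous_on (cell x y i j) (A i j k l)" if "k < M" "l < M" for k l
    using C1_continuous_on[OF A[OF that]] cell_U by (rule continuous_on_subset)
  have cP: "continuous_on UNIV (P k)" if "k < M" for k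
    unfolding P_def using v_poly ij that by (blast intro: poly2_continuous_on)
  have cS: "continuous_on UNIV (S1 k)" "continuous_on UNIV (S2 k)" if "k < M" for k
    unfolding S1_def S2_def using S_poly that by (blast intro: poly2_continuous_on)+
  have sym_x: "?EX s f g = ?EX s g f"
    if "s \<in> {x i..x (Suc i)}" "\<And>l. l < M \<Longrightarrow> continuous_on UNIV (f l)"
      "\<And>k. k < M \<Longrightarrow> continuous_on UNIV (g k)" for s f g
    using that(1) cA A_sym that(2,3) by (rule cell_edge_x_sym)
  have sym_y: "?EY t f g = ?EY t g f"
    if "t \<in> {y j..y (Suc j)}" "\<And>l. l < M \<Longrightarrow> continuous_on UNIV (f l)"
      "\<And>k. k < M \<Longrightarrow> continuous_on UNIV (g k)" for t f g
    using that(1) cA A_sym that(2,3) by (rule cell_edge_y_sym)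
  let ?vol1 = "\<Sum>k<M. integral (cell x y i j) (\<lambda>z. (\<Sum>l<M. A i j k l z *\<^sub>R S n l i j z) \<bullet> grad (P k) z)"
  let ?vol2 = "\<Sum>k<M. integral (cell x y i j) (\<lambda>z. (\<Sum>l<M. A i j k l z * P l z) * dive (S n k i j) z)"
  let ?vol3 = "\<Sum>k<M. integral (cell x y i j) (\<lambda>z. (\<Sum>l<M. P l z *\<^sub>R grad (A i j k l) z) \<bullet> S n k i j z)"
  let ?FR = "if Suc i < Nx then interface_flux_x x y M A (S n) (v m) (Suc i) j else 0"
  let ?FT = "if Suc j < Ny then interface_flux_y x y M A (S n) (v m) i (Suc j) else 0"
  have green: "?vol1 + ?vol2 + ?vol3
      = ?EX (x (Suc i)) P S1 - ?EX (x i) P S1 + ?EY (y (Suc j)) P S2 - ?EY (y j) P S2"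
    unfolding cell_edge_x_def cell_edge_y_def S1_def S2_def using cell_U mesh A A_sym S_poly
    unfolding cell_def
    by (intro matrix_green_cbox) (auto simp: P_def intro: poly2_C1 v_poly[rule_format] ij)
  note e1 = eq1_cell_edge_form[OF eq1, folded P_def S1_def S2_def]
  note e2 = eq2_cell_edge_form[OF eq2, folded P_def S1_def S2_def]
  have x_edges: "x i \<in> {x i..x (Suc i)}" "x (Suc i) \<in> {x i..x (Suc i)}"
    and y_edges: "y j \<in> {y j..y (Suc j)}" "y (Suc j) \<in> {y j..y (Suc j)}"
    using mesh by auto
  have "?EX (x (Suc i)) (\<lambda>l. v m l (Suc i) j) S1 = ?EX (x (Suc i)) S1 (\<lambda>l. v m l (Suc i) j)"
    if "Suc i < Nx"
    by (rule sym_x[OF x_edges(2)]) (use v_poly ij that cS in \<open>auto intro: poly2_continuous_on\<close>)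
  moreover have "?EY (y (Suc j)) (\<lambda>l. v m l i (Suc j)) S2 = ?EY (y (Suc j)) S2 (\<lambda>l. v m l i (Suc j))"
    if "Suc j < Ny"
    by (rule sym_y[OF y_edges(2)]) (use v_poly ij that cS in \<open>auto intro: poly2_continuous_on\<close>)
  ultimately have "(if Suc i < Nx then ?EX (x (Suc i)) (\<lambda>l. v m l (Suc i) j) S1 else 0) = ?FR"
    and "(if Suc j < Ny then ?EY (y (Suc j)) (\<lambda>l. v m l i (Suc j)) S2 else 0) = ?FT"
    by (simp_all add: S1_def S2_def interface_flux_x_def interface_flux_y_def)
  moreover have "?EX s P S1 = ?EX s S1 P" if "s \<in> {x i..x (Suc i)}" for s
    using that cP cS by (intro sym_x)
  moreover have "?EY t P S2 = ?EY t S2 P" if "t \<in> {y j..y (Suc j)}" for t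
    using that cP cS by (intro sym_y)
  ultimately show ?thesis
    using green e1 e2 x_edges y_edges unfolding interface_flux_x_def interface_flux_y_def
    by (cases "i = 0"; cases "j = 0") (simp_all add: P_def S1_def S2_def)
qed

section \<open>Summation over the mesh and conservation of the energy\<close>

definition leapfrog_pairing ::
  "(nat \<Rightarrow> real) \<Rightarrow> (nat \<Rightarrow> real) \<Rightarrow> nat \<Rightarrow> nat \<Rightarrow> nat \<Rightarrow> real
   \<Rightarrow> (nat \<Rightarrow> nat \<Rightarrow> nat \<Rightarrow> nat \<Rightarrow> real \<times> real \<Rightarrow> real)
   \<Rightarrow> (nat \<Rightarrow> nat \<Rightarrow> nat \<Rightarrow> nat \<Rightarrow> real \<times> real \<Rightarrow> real \<times> real) \<Rightarrow> nat \<Rightarrow> nat \<Rightarrow> real" where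
  "leapfrog_pairing x y Nx Ny M dt v S n m =
     (\<Sum>i<Nx. \<Sum>j<Ny. (\<Sum>k<M. integral (cell x y i j)
        (\<lambda>z. (v (Suc n) k i j z - 2 * v n k i j z + v (n - 1) k i j z) / dt ^ 2 * v m k i j z))
      + (\<Sum>k<M. integral (cell x y i j) (\<lambda>z. S m k i j z \<bullet> S n k i j z)))"

lemma sum_interface_telescope:
  fixes g :: "nat \<Rightarrow> 'a::ab_group_add"
  shows "(\<Sum>i<N. (if Suc i < N then g (Suc i) else 0) - (if i = 0 then 0 else g i)) = 0"
proof (cases N)
  case (Suc N')
  have "(\<Sum>i<Suc N'. if Suc i < Suc N' then g (Suc i) else 0) = (\<Sum>i<N'. g (Suc i))"
    by simp
  moreover have "(\<Sum>i<Suc N'. if i = 0 then 0 else g i) = (\<Sum>i<N'. g (Suc i))"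
    by (subst sum.lessThan_Suc_shift) simp
  ultimately show ?thesis
    using Suc by (simp add: sum_subtractf)
qed simp

lemma scheme_balance:
  assumes xmono: "\<forall>i<Nx. x i < x (Suc i)" and ymono: "\<forall>j<Ny. y j < y (Suc j)"
    and A_smooth: "\<forall>i<Nx. \<forall>j<Ny. \<forall>k<M. \<forall>l<M. smooth_near (A i j k l) (cell x y i j)"
    and A_sym: "\<forall>i<Nx. \<forall>j<Ny. \<forall>k<M. \<forall>l<M. \<forall>z\<in>cell x y i j. A i j k l z = A i j l k z"
    and v_poly: "\<forall>k<M. \<forall>i<Nx. \<forall>j<Ny. poly2 deg (v m k i j)"
    and S_poly: "\<forall>k<M. \<forall>i<Nx. \<forall>j<Ny.
                   poly2 deg (\<lambda>z. fst (S n k i j z)) \<and> poly2 deg (\<lambda>z. snd (S n k i j z))"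
    and eq1: "\<forall>i<Nx. \<forall>j<Ny. eq1 x y M dt A v S n i j (\<lambda>k. v m k i j)"
    and eq2: "\<forall>i<Nx. \<forall>j<Ny. eq2 x y Nx Ny M A v S m i j (\<lambda>k. S n k i j)"
  shows "leapfrog_pairing x y Nx Ny M dt v S n m = 0"
proof -
  let ?FX = "interface_flux_x x y M A (S n) (v m)" and ?FY = "interface_flux_y x y M A (S n) (v m)"
  have "leapfrog_pairing x y Nx Ny M dt v S n m
     = (\<Sum>i<Nx. \<Sum>j<Ny. ((if Suc i < Nx then ?FX (Suc i) j else 0) - (if i = 0 then 0 else ?FX i j))
       + ((if Suc j < Ny then ?FY i (Suc j) else 0) - (if j = 0 then 0 else ?FY i j)))"
    unfolding leapfrog_pairing_def
  proof (intro sum.cong refl)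
    fix i j assume "i \<in> {..<Nx}" "j \<in> {..<Ny}"
    then have ij: "i < Nx" "j < Ny" by auto
    obtain U where U: "cell x y i j \<subseteq> U" "\<And>k l. k < M \<Longrightarrow> l < M \<Longrightarrow> Ck (Suc 0) (A i j k l) U"
      using A_smooth ij by (metis smooth_near_common_C1)
    show "(\<Sum>k<M. integral (cell x y i j)
            (\<lambda>z. (v (Suc n) k i j z - 2 * v n k i j z + v (n - 1) k i j z) / dt ^ 2 * v m k i j z))
       + (\<Sum>k<M. integral (cell x y i j) (\<lambda>z. S m k i j z \<bullet> S n k i j z))
     = ((if Suc i < Nx then ?FX (Suc i) j else 0) - (if i = 0 then 0 else ?FX i j))
       + ((if Suc j < Ny then ?FY i (Suc j) else 0) - (if j = 0 then 0 else ?FY i j))"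
      by (rule cell_balance[where U = U])
         (use ij xmono ymono U A_sym v_poly S_poly eq1 eq2 in \<open>simp_all add: less_imp_le, meson\<close>)
  qed
  also have "\<dots> = (\<Sum>j<Ny. \<Sum>i<Nx.
          (if Suc i < Nx then ?FX (Suc i) j else 0) - (if i = 0 then 0 else ?FX i j))
      + (\<Sum>i<Nx. \<Sum>j<Ny. (if Suc j < Ny then ?FY i (Suc j) else 0) - (if j = 0 then 0 else ?FY i j))"
    by (simp only: sum.distrib sum.swap[of _ "{..<Nx}"])
  also have "\<dots> = 0"
  proof -
    have "(\<Sum>i<Nx. (if Suc i < Nx then ?FX (Suc i) j else 0) - (if i = 0 then 0 else ?FX i j)) = 0" for j
      using sum_interface_telescope[of Nx "\<lambda>i. ?FX i j"] by simp
    then show ?thesis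
      by (simp add: sum_interface_telescope)
  qed
  finally show ?thesis .
qed

lemma leapfrog_energy_identity:
  fixes a b c dt :: real and P Q R :: "'a::real_inner"
  assumes "dt \<noteq> 0"
  shows "((norm ((a - b) / dt))\<^sup>2 + (norm ((1 / 2) *\<^sub>R (P + Q)))\<^sup>2
          - dt ^ 2 / 4 * (norm ((1 / dt) *\<^sub>R (P - Q)))\<^sup>2)
       - ((norm ((b - c) / dt))\<^sup>2 + (norm ((1 / 2) *\<^sub>R (Q + R)))\<^sup>2
          - dt ^ 2 / 4 * (norm ((1 / dt) *\<^sub>R (Q - R)))\<^sup>2)
       = ((a - 2 * b + c) / dt ^ 2 * a + P \<bullet> Q) - ((a - 2 * b + c) / dt ^ 2 * c + R \<bullet> Q)"
proof -
  have polarization: "(norm ((1 / 2) *\<^sub>R (X + Y)))\<^sup>2 - dt ^ 2 / 4 * (norm ((1 / dt) *\<^sub>R (X - Y)))\<^sup>2 = X \<bullet> Y"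
    for X Y :: 'a
    using assms unfolding power2_norm_eq_inner
    by (simp add: inner_add_left inner_add_right inner_diff_left inner_diff_right
        inner_commute[of Y X] field_simps power2_eq_square)
  have "(norm ((a - b) / dt))\<^sup>2 - (norm ((b - c) / dt))\<^sup>2
      = (a - 2 * b + c) / dt ^ 2 * a - (a - 2 * b + c) / dt ^ 2 * c"
    using assms by (simp add: field_simps power2_eq_square)
  then show ?thesis
    using polarization[of P Q] polarization[of Q R] inner_commute[of R Q] by linarith
qed

definition energy_density ::
  "real \<Rightarrow> (nat \<Rightarrow> nat \<Rightarrow> nat \<Rightarrow> nat \<Rightarrow> real \<times> real \<Rightarrow> real)
   \<Rightarrow> (nat \<Rightarrow> nat \<Rightarrow> nat \<Rightarrow> nat \<Rightarrow> real \<times> real \<Rightarrow> real \<times> real) \<Rightarrow> nat \<Rightarrow> nat \<Rightarrow> nat \<Rightarrow> nat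
   \<Rightarrow> real \<times> real \<Rightarrow> real" where
  "energy_density dt v S n k i j z =
     (norm ((v n k i j z - v (n - 1) k i j z) / dt))\<^sup>2
   + (norm ((1 / 2) *\<^sub>R (S n k i j z + S (n - 1) k i j z)))\<^sup>2
   - dt ^ 2 / 4 * (norm ((1 / dt) *\<^sub>R (S n k i j z - S (n - 1) k i j z)))\<^sup>2"

lemma energy_eq_integral_density:
  assumes v: "\<And>n k i j. k < M \<Longrightarrow> i < Nx \<Longrightarrow> j < Ny \<Longrightarrow> continuous_on (cell x y i j) (v n k i j)"
    and S: "\<And>n k i j. k < M \<Longrightarrow> i < Nx \<Longrightarrow> j < Ny \<Longrightarrow> continuous_on (cell x y i j) (S n k i j)"
  shows "energy x y Nx Ny M dt v S n
       = (\<Sum>i<Nx. \<Sum>j<Ny. \<Sum>k<M. integral (cell x y i j) (energy_density dt v S n k i j))"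
proof -
  have "integral (cell x y i j) (energy_density dt v S n k i j)
      = integral (cell x y i j) (\<lambda>z. (norm ((v n k i j z - v (n - 1) k i j z) / dt))\<^sup>2)
      + integral (cell x y i j) (\<lambda>z. (norm ((1 / 2) *\<^sub>R (S n k i j z + S (n - 1) k i j z)))\<^sup>2)
      - dt ^ 2 / 4 * integral (cell x y i j)
          (\<lambda>z. (norm ((1 / dt) *\<^sub>R (S n k i j z - S (n - 1) k i j z)))\<^sup>2)"
    if "k < M" "i < Nx" "j < Ny" for k i j
    unfolding energy_density_def divide_inverse using v[OF that] S[OF that] unfolding cell_def
    by (intro integral_unique has_integral_diff has_integral_add has_integral_mult_right
        integrable_integral integrable_continuous continuous_intros)
  then show ?thesis
    unfolding energy_def l2sq_def
    by (simp add: sum_distrib_left sum.distrib[symmetric] sum_subtractf[symmetric])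
qed

lemma energy_increment:
  assumes dt: "dt \<noteq> 0"
    and v: "\<And>n k i j. k < M \<Longrightarrow> i < Nx \<Longrightarrow> j < Ny \<Longrightarrow> continuous_on (cell x y i j) (v n k i j)"
    and S: "\<And>n k i j. k < M \<Longrightarrow> i < Nx \<Longrightarrow> j < Ny \<Longrightarrow> continuous_on (cell x y i j) (S n k i j)"
  shows "energy x y Nx Ny M dt v S (Suc n) - energy x y Nx Ny M dt v S n
       = leapfrog_pairing x y Nx Ny M dt v S n (Suc n) - leapfrog_pairing x y Nx Ny M dt v S n (n - 1)"
proof -
  have cell_increment:
    "integral (cell x y i j) (energy_density dt v S (Suc n) k i j)
       - integral (cell x y i j) (energy_density dt v S n k i j)
     = (integral (cell x y i j)
          (\<lambda>z. (v (Suc n) k i j z - 2 * v n k i j z + v (n - 1) k i j z) / dt ^ 2 * v (Suc n) k i j z)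
        + integral (cell x y i j) (\<lambda>z. S (Suc n) k i j z \<bullet> S n k i j z))
     - (integral (cell x y i j)
          (\<lambda>z. (v (Suc n) k i j z - 2 * v n k i j z + v (n - 1) k i j z) / dt ^ 2 * v (n - 1) k i j z)
        + integral (cell x y i j) (\<lambda>z. S (n - 1) k i j z \<bullet> S n k i j z))" (is "_ = ?rhs")
    if "k < M" "i < Nx" "j < Ny" for k i j
  proof -
    have "integral (cell x y i j) (energy_density dt v S (Suc n) k i j)
        - integral (cell x y i j) (energy_density dt v S n k i j)
      = integral (cell x y i j)
          (\<lambda>z. energy_density dt v S (Suc n) k i j z - energy_density dt v S n k i j z)"
      unfolding energy_density_def divide_inverse using v[OF that] S[OF that] unfolding cell_def
      by (intro integral_diff[symmetric] integrable_continuous continuous_intros)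
    also have "\<dots> = integral (cell x y i j)
        (\<lambda>z. ((v (Suc n) k i j z - 2 * v n k i j z + v (n - 1) k i j z) / dt ^ 2 * v (Suc n) k i j z
              + S (Suc n) k i j z \<bullet> S n k i j z)
           - ((v (Suc n) k i j z - 2 * v n k i j z + v (n - 1) k i j z) / dt ^ 2 * v (n - 1) k i j z
              + S (n - 1) k i j z \<bullet> S n k i j z))"
      unfolding energy_density_def diff_Suc_1 by (intro integral_cong leapfrog_energy_identity dt)
    also have "\<dots> = ?rhs"
      unfolding divide_inverse using v[OF that] S[OF that] unfolding cell_def
      by (intro integral_unique has_integral_diff has_integral_add
          integrable_integral integrable_continuous continuous_intros)
    finally show ?thesis .
  qed
  have "energy x y Nx Ny M dt v S (Suc n) - energy x y Nx Ny M dt v S n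
      = (\<Sum>i<Nx. \<Sum>j<Ny. \<Sum>k<M. integral (cell x y i j) (energy_density dt v S (Suc n) k i j)
          - integral (cell x y i j) (energy_density dt v S n k i j))"
    by (simp only: energy_eq_integral_density[OF v S] sum_subtractf)
  then show ?thesis
    unfolding leapfrog_pairing_def by (simp add: cell_increment sum_subtractf sum.distrib)
qed

theorem theorem3:
  fixes x y :: "nat \<Rightarrow> real" and Nx Ny M deg :: nat and dt :: real
    and A :: "nat \<Rightarrow> nat \<Rightarrow> nat \<Rightarrow> nat \<Rightarrow> real \<times> real \<Rightarrow> real"
    and v :: "nat \<Rightarrow> nat \<Rightarrow> nat \<Rightarrow> nat \<Rightarrow> real \<times> real \<Rightarrow> real"
    and S :: "nat \<Rightarrow> nat \<Rightarrow> nat \<Rightarrow> nat \<Rightarrow> real \<times> real \<Rightarrow> real \<times> real"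
  assumes Nx: "0 < Nx" and Ny: "0 < Ny" and M: "0 < M"
    and xmono: "\<forall>i<Nx. x i < x (Suc i)" and ymono: "\<forall>j<Ny. y j < y (Suc j)"
    and dt: "0 < dt"
    and A_smooth: "\<forall>i<Nx. \<forall>j<Ny. \<forall>k<M. \<forall>l<M. smooth_near (A i j k l) (cell x y i j)"
    and A_sym: "\<forall>i<Nx. \<forall>j<Ny. \<forall>k<M. \<forall>l<M. \<forall>z\<in>cell x y i j. A i j k l z = A i j l k z"
    and A_pd: "\<forall>i<Nx. \<forall>j<Ny. \<forall>z\<in>cell x y i j. \<forall>\<xi> :: nat \<Rightarrow> real. (\<exists>k<M. \<xi> k \<noteq> 0) \<longrightarrow>
                 0 < (\<Sum>k<M. \<Sum>l<M. \<xi> k * A i j k l z * \<xi> l)"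
    and v_space: "\<forall>n. \<forall>k<M. \<forall>i<Nx. \<forall>j<Ny. poly2 deg (v n k i j)"
    and S_space: "\<forall>n. \<forall>k<M. \<forall>i<Nx. \<forall>j<Ny.
                    poly2 deg (\<lambda>z. fst (S n k i j z)) \<and> poly2 deg (\<lambda>z. snd (S n k i j z))"
    and scheme1: "\<forall>n\<ge>1. \<forall>i<Nx. \<forall>j<Ny. \<forall>p. (\<forall>k<M. poly2 deg (p k)) \<longrightarrow>
                    eq1 x y M dt A v S n i j p"
    and scheme2: "\<forall>n. \<forall>i<Nx. \<forall>j<Ny. \<forall>w.
                    (\<forall>k<M. poly2 deg (\<lambda>z. fst (w k z)) \<and> poly2 deg (\<lambda>z. snd (w k z))) \<longrightarrow>
                    eq2 x y Nx Ny M A v S n i j w"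
  shows "\<forall>n\<ge>1. energy x y Nx Ny M dt v S (Suc n) = energy x y Nx Ny M dt v S n"
proof (intro allI impI)
  fix n :: nat
  assume "n \<ge> 1"
  have balance: "leapfrog_pairing x y Nx Ny M dt v S n m = 0" for m
  proof (rule scheme_balance[where deg = deg, OF xmono ymono A_smooth A_sym])
    show "\<forall>i<Nx. \<forall>j<Ny. eq1 x y M dt A v S n i j (\<lambda>k. v m k i j)"
      using v_space by (intro allI impI scheme1[rule_format] \<open>n \<ge> 1\<close>) simp_all
    show "\<forall>i<Nx. \<forall>j<Ny. eq2 x y Nx Ny M A v S m i j (\<lambda>k. S n k i j)"
      using S_space by (intro allI impI scheme2[rule_format]) simp_all
  qed (use v_space S_space in simp_all)
  have v_cont: "continuous_on (cell x y i j) (v m k i j)"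
    and S_cont: "continuous_on (cell x y i j) (S m k i j)"
    if "k < M" "i < Nx" "j < Ny" for m k i j
    using v_space S_space that by (blast intro: poly2_continuous_on poly2_pair_continuous_on)+
  have "dt \<noteq> 0"
    using dt by simp
  from energy_increment[of dt M Nx Ny x y v S n, OF this v_cont S_cont]
  show "energy x y Nx Ny M dt v S (Suc n) = energy x y Nx Ny M dt v S n"
    by (simp add: balance)
qed

end
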